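(* (i) A $\mathbb{B}$-topological space $(X,\tau)$ is normal if and only if both topological spaces $(X,\tau[tt])$ and $(X,\tau[ff])$ are normal. (ii) $(X,\tau)$ is $T_4$ if and only if the topological space $(X,\tau[tt]\vee\tau[ff])$ is $T_0$, both $(X,\tau[tt])$ and $(X,\tau[ff])$ are $R_0$, and both $(X,\tau[tt])$ and $(X,\tau[ff])$ are normal.
   Context: $\mathbb{B}=\{0,1,tt,ff\}$ is the four-element Boolean algebra with bottom $0$, top $1$, and $tt,ff$ incomparable complements; $\neg$ its complement, $a\to b=\neg a\vee b$. A $\mathbb{B}$-topology on $X$ is $\tau\subseteq\mathbb{B}^X$ containing all constant maps and closed under arbitrary pointwise joins and finite pointwise meets; $\mu$ is closed if $\neg\mu\in\tau$; $\overline{\nu}$ is the meet of all closed sets $\ge\nu$. $\tau[b]=\{\lambda[b]:\lambda\in\tau\}$, $\lambda[b]=\{x:\lambda(x)\ge b\}$; $\tau[tt]\vee\tau[ff]$ is the topology generated by their union. $(X,\tau)$ is normal if for every open $\lambda$ and closed $\mu$ with $\mu\le\lambda$ there is an open $\nu$ with $\mu\le\nu\le\overline{\nu}\le\lambda$. Specialization $\mathbb{B}$-order: $\Omega(\tau)(x,y)=\bigwedge_{\lambda\in\tau}(\lambda(x)\to\lambda(y))$; $(X,\tau)$ is $R_0$ if $\Omega(\tau)$ is symmetric, $T_0$ if $\Omega(\tau)(x,y)=1=\Omega(\tau)(y,x)$ implies $x=y$, $T_1$ if $T_0$ and $R_0$, and $T_4$ if $T_1$ and normal. A topological space is normal if disjoint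 closed sets have disjoint open neighbourhoods (no separation assumption on points); it is $R_0$ if every open set containing a point contains the closure of that point's singleton. *)

theory Defs
  imports "HOL-Analysis.Analysis" "HOL-Library.Product_Order"
begin

text \<open>The four-element Boolean algebra is modelled as bool \<times> bool with the
componentwise (product) order: 0 = (False,False), 1 = (True,True),
tt = (True,False), ff = (False,True).\<close>

type_synonym B4 = "bool \<times> bool"

definition tt :: B4 where "tt = (True, False)"
definition ff :: B4 where "ff = (False, True)"

definition bimp :: "B4 \<Rightarrow> B4 \<Rightarrow> B4" where "bimp a b = sup (- a) b"

text \<open>B-topology on the carrier UNIV of type 'a (maps X \<Rightarrow> B, ordered pointwise).\<close>
definition B_topology :: "('a \<Rightarrow> B4) set \<Rightarrow> bool" where
  "B_topology \<tau> \<longleftrightarrow>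
     (\<forall>c. (\<lambda>_. c) \<in> \<tau>) \<and>
     (\<forall>S. S \<subseteq> \<tau> \<longrightarrow> Sup S \<in> \<tau>) \<and>
     (\<forall>l m. l \<in> \<tau> \<longrightarrow> m \<in> \<tau> \<longrightarrow> inf l m \<in> \<tau>)"

definition B_closed :: "('a \<Rightarrow> B4) set \<Rightarrow> ('a \<Rightarrow> B4) \<Rightarrow> bool" where
  "B_closed \<tau> \<mu> \<longleftrightarrow> - \<mu> \<in> \<tau>"

definition B_closure :: "('a \<Rightarrow> B4) set \<Rightarrow> ('a \<Rightarrow> B4) \<Rightarrow> ('a \<Rightarrow> B4)" where
  "B_closure \<tau> \<nu> = Inf {\<mu>. B_closed \<tau> \<mu> \<and> \<nu> \<le> \<mu>}"

definition B_normal :: "('a \<Rightarrow> B4) set \<Rightarrow> bool" where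
  "B_normal \<tau> \<longleftrightarrow>
     (\<forall>l m. l \<in> \<tau> \<longrightarrow> B_closed \<tau> m \<longrightarrow> m \<le> l \<longrightarrow>
        (\<exists>n \<in> \<tau>. m \<le> n \<and> n \<le> B_closure \<tau> n \<and> B_closure \<tau> n \<le> l))"

definition level :: "('a \<Rightarrow> B4) \<Rightarrow> B4 \<Rightarrow> 'a set" where
  "level l b = {x. b \<le> l x}"

definition levels :: "('a \<Rightarrow> B4) set \<Rightarrow> B4 \<Rightarrow> 'a set set" where
  "levels \<tau> b = (\<lambda>l. level l b) ` \<tau>"

definition level_top :: "('a \<Rightarrow> B4) set \<Rightarrow> B4 \<Rightarrow> 'a topology" where
  "level_top \<tau> b = topology (\<lambda>U. U \<in> levels \<tau> b)"

definition join_top :: "('a \<Rightarrow> B4) set \<Rightarrow> 'a topology" where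
  "join_top \<tau> = topology_generated_by (levels \<tau> tt \<union> levels \<tau> ff)"

definition spec_order :: "('a \<Rightarrow> B4) set \<Rightarrow> 'a \<Rightarrow> 'a \<Rightarrow> B4" where
  "spec_order \<tau> x y = (INF l\<in>\<tau>. bimp (l x) (l y))"

definition B_R0 :: "('a \<Rightarrow> B4) set \<Rightarrow> bool" where
  "B_R0 \<tau> \<longleftrightarrow> (\<forall>x y. spec_order \<tau> x y = spec_order \<tau> y x)"

definition B_T0 :: "('a \<Rightarrow> B4) set \<Rightarrow> bool" where
  "B_T0 \<tau> \<longleftrightarrow> (\<forall>x y. spec_order \<tau> x y = top \<and> spec_order \<tau> y x = top \<longrightarrow> x = y)"

definition B_T1 :: "('a \<Rightarrow> B4) set \<Rightarrow> bool" where
  "B_T1 \<tau> \<longleftrightarrow> B_T0 \<tau> \<and> B_R0 \<tau>"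

definition B_T4 :: "('a \<Rightarrow> B4) set \<Rightarrow> bool" where
  "B_T4 \<tau> \<longleftrightarrow> B_T1 \<tau> \<and> B_normal \<tau>"

definition r0_space :: "'a topology \<Rightarrow> bool" where
  "r0_space T \<longleftrightarrow>
     (\<forall>U x. openin T U \<longrightarrow> x \<in> U \<longrightarrow> T closure_of {x} \<subseteq> U)"

end

theory Submission
  imports Defs
begin

text \<open>Since \<open>\<bbbB> = 2 \<times> 2\<close>, a map \<open>X \<rightarrow> \<bbbB>\<close> is the same as the pair of its
slices \<open>\<lambda>[tt], \<lambda>[ff]\<close>. A \<open>\<bbbB>\<close>-topology contains the constants \<open>tt\<close>, \<open>ff\<close> and is
closed under \<open>\<and>, \<or>\<close>, so it can glue a \<open>tt\<close>-slice of one open map to an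
\<open>ff\<close>-slice of another: \<open>\<tau>\<close> is exactly the product \<open>\<tau>[tt] \<times> \<tau>[ff]\<close>. Consequently
closed sets, closures and the specialization order are computed slice by slice,
which turns \<open>\<bbbB>\<close>-normality and \<open>R\<^sub>0\<close> into the corresponding properties of both
level spaces, and \<open>T\<^sub>0\<close> into the \<open>T\<^sub>0\<close> property of their join.\<close>

lemma r0_space_iff_closure_of_singleton_sym:
  "r0_space X \<longleftrightarrow> (\<forall>x y. x \<in> X closure_of {y} \<longrightarrow> y \<in> X closure_of {x})"
proof (intro iffI allI impI)
  fix x y assume r0: "r0_space X" and x: "x \<in> X closure_of {y}"
  have "y \<in> topspace X"
    using x openin_topspace[of X] unfolding in_closure_of by blast
  moreover have "x \<in> U" if "openin X U" "y \<in> U" for U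
  proof -
    have "X closure_of {y} \<subseteq> U"
      using r0 that unfolding r0_space_def by blast
    then show ?thesis
      using x by blast
  qed
  ultimately show "y \<in> X closure_of {x}"
    by (auto simp: in_closure_of)
next
  assume sym: "\<forall>x y. x \<in> X closure_of {y} \<longrightarrow> y \<in> X closure_of {x}"
  show "r0_space X"
    unfolding r0_space_def
  proof (intro allI impI subsetI)
    fix U x z assume "openin X U" "x \<in> U" "z \<in> X closure_of {x}"
    moreover have "x \<in> X closure_of {z}"
      using sym \<open>z \<in> X closure_of {x}\<close> by blast
    ultimately show "z \<in> U"
      by (auto simp: in_closure_of)
  qed
qed

lemma generate_topology_on_indistinguishable:
  "generate_topology_on S U \<Longrightarrow> \<forall>V\<in>S. x \<in> V \<longleftrightarrow> y \<in> V \<Longrightarrow> x \<in> U \<longleftrightarrow> y \<in> U"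
  by (induction rule: generate_topology_on.induct) auto

lemma t0_space_topology_generated_by:
  "t0_space (topology_generated_by S) \<longleftrightarrow>
    (\<forall>x\<in>\<Union>S. \<forall>y\<in>\<Union>S. (\<forall>U\<in>S. x \<in> U \<longleftrightarrow> y \<in> U) \<longrightarrow> x = y)"
proof -
  have "(\<exists>U. openin (topology_generated_by S) U \<and> (x \<notin> U \<longleftrightarrow> y \<in> U)) \<longleftrightarrow>
      \<not> (\<forall>U\<in>S. x \<in> U \<longleftrightarrow> y \<in> U)" (is "?open \<longleftrightarrow> \<not> ?indist") for x y
  proof
    assume ?open
    then obtain U where "generate_topology_on S U" "x \<notin> U \<longleftrightarrow> y \<in> U"
      using openin_topology_generated_by by meson
    then show "\<not> ?indist"
      using generate_topology_on_indistinguishable by meson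
  next
    assume "\<not> ?indist"
    then obtain U where "U \<in> S" "x \<notin> U \<longleftrightarrow> y \<in> U"
      by meson
    then show ?open
      using topology_generated_by_Basis by meson
  qed
  then have "(x \<noteq> y \<longrightarrow> (\<exists>U. openin (topology_generated_by S) U \<and> (x \<notin> U \<longleftrightarrow> y \<in> U))) \<longleftrightarrow>
      ((\<forall>U\<in>S. x \<in> U \<longleftrightarrow> y \<in> U) \<longrightarrow> x = y)" for x y
    by auto
  then show ?thesis
    unfolding t0_space_def topology_generated_by_topspace by (simp only:)
qed

definition B4_atom :: "bool \<Rightarrow> B4" where "B4_atom i = (if i then tt else ff)"

definition B4_coord :: "bool \<Rightarrow> B4 \<Rightarrow> bool" where "B4_coord i = (if i then fst else snd)"

definition slice :: "('a \<Rightarrow> B4) \<Rightarrow> bool \<Rightarrow> 'a set" where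
  "slice l i = {x. B4_coord i (l x)}"

definition of_slices :: "(bool \<Rightarrow> 'a set) \<Rightarrow> 'a \<Rightarrow> B4" where
  "of_slices F = (\<lambda>x. (x \<in> F True, x \<in> F False))"

lemma B4_coord_simps [simp]:
  "B4_coord i (inf a b) \<longleftrightarrow> B4_coord i a \<and> B4_coord i b"
  "B4_coord i (sup a b) \<longleftrightarrow> B4_coord i a \<or> B4_coord i b"
  "B4_coord i (- a) \<longleftrightarrow> \<not> B4_coord i a"
  "B4_coord i (Sup A) \<longleftrightarrow> (\<exists>a\<in>A. B4_coord i a)"
  "B4_coord i (Inf A) \<longleftrightarrow> (\<forall>a\<in>A. B4_coord i a)"
  "B4_coord i top" "\<not> B4_coord i bot"
  "B4_coord i tt \<longleftrightarrow> i" "B4_coord i ff \<longleftrightarrow> \<not> i"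
  by (cases i; auto simp: B4_coord_def fst_Sup snd_Sup fst_Inf snd_Inf tt_def ff_def)+

lemma B4_eq_iff_coord: "(a::B4) = b \<longleftrightarrow> (\<forall>i. B4_coord i a \<longleftrightarrow> B4_coord i b)"
  by (cases a; cases b) (auto simp: B4_coord_def)

lemma B4_le_iff_coord: "(a::B4) \<le> b \<longleftrightarrow> (\<forall>i. B4_coord i a \<longrightarrow> B4_coord i b)"
  by (cases a; cases b) (auto simp: B4_coord_def le_bool_def)

lemma B4_atom_le_iff: "B4_atom i \<le> a \<longleftrightarrow> B4_coord i a"
  by (cases i) (auto simp: B4_atom_def B4_le_iff_coord)

lemma all_B4_atom: "(\<forall>i. P (B4_atom i)) \<longleftrightarrow> P tt \<and> P ff"
  by (metis B4_atom_def)

lemma level_B4_atom: "level l (B4_atom i) = slice l i"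
  by (simp add: level_def slice_def B4_atom_le_iff)

lemma fun_le_iff_slices: "(f::'a \<Rightarrow> B4) \<le> g \<longleftrightarrow> (\<forall>i. slice f i \<subseteq> slice g i)"
  by (auto simp: le_fun_def B4_le_iff_coord slice_def)

lemma slice_of_slices [simp]: "slice (of_slices F) i = F i"
  by (cases i) (auto simp: slice_def of_slices_def B4_coord_def)

lemma slice_simps [simp]:
  "slice (\<lambda>_. c) i = (if B4_coord i c then UNIV else {})"
  "slice (- l) i = - slice l i"
  "slice (inf l m) i = slice l i \<inter> slice m i"
  "slice (sup l m) i = slice l i \<union> slice m i"
  by (auto simp: slice_def)

lemma slice_Sup [simp]: "slice (Sup S) i = (\<Union>l\<in>S. slice l i)"
  by (auto simp: slice_def)

lemma slice_Inf [simp]: "slice (Inf S) i = (\<Inter>l\<in>S. slice l i)"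
  by (auto simp: slice_def)

lemma mem_levels_B4_atom: "U \<in> levels \<tau> (B4_atom i) \<longleftrightarrow> (\<exists>l\<in>\<tau>. U = slice l i)"
  by (auto simp: levels_def level_B4_atom)

lemma of_slices_slice [simp]: "of_slices (slice l) = l"
  by (auto simp: fun_eq_iff B4_eq_iff_coord) (auto simp: of_slices_def slice_def B4_coord_def)

lemma B_topology_const: "B_topology \<tau> \<Longrightarrow> (\<lambda>_. c) \<in> \<tau>"
  by (cases c) (simp add: B_topology_def)

lemma B_topology_inf: "B_topology \<tau> \<Longrightarrow> l \<in> \<tau> \<Longrightarrow> m \<in> \<tau> \<Longrightarrow> inf l m \<in> \<tau>"
  by (simp add: B_topology_def)

lemma B_topology_Sup: "B_topology \<tau> \<Longrightarrow> S \<subseteq> \<tau> \<Longrightarrow> Sup S \<in> \<tau>"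
  by (simp add: B_topology_def)

lemma B_topology_sup: "B_topology \<tau> \<Longrightarrow> l \<in> \<tau> \<Longrightarrow> m \<in> \<tau> \<Longrightarrow> sup l m \<in> \<tau>"
  using B_topology_Sup[of \<tau> "{l, m}"] by simp

lemma eq_of_slices_iff: "l = of_slices F \<longleftrightarrow> (\<forall>i. slice l i = F i)"
  by (metis of_slices_slice slice_of_slices ext)

lemma of_slices_in_B_topology:
  assumes \<tau>: "B_topology \<tau>" and F: "\<And>i. F i \<in> levels \<tau> (B4_atom i)"
  shows "of_slices F \<in> \<tau>"
proof -
  obtain l m where "l \<in> \<tau>" "F True = slice l True" "m \<in> \<tau>" "F False = slice m False"
    using F[of True] F[of False] by (auto simp: mem_levels_B4_atom)
  \<comment> \<open>meeting with the constants \<open>tt\<close> and \<open>ff\<close> cuts out one slice each\<close>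
  moreover have "sup (inf l (\<lambda>_. tt)) (inf m (\<lambda>_. ff)) = of_slices F"
    unfolding eq_of_slices_iff using calculation by (auto split: bool.split)
  ultimately show ?thesis
    by (metis \<tau> B_topology_const B_topology_inf B_topology_sup)
qed

lemma mem_B_topology_iff:
  "B_topology \<tau> \<Longrightarrow> l \<in> \<tau> \<longleftrightarrow> (\<forall>i. slice l i \<in> levels \<tau> (B4_atom i))"
  by (metis mem_levels_B4_atom of_slices_in_B_topology of_slices_slice)

lemma Int_in_levels:
  assumes \<tau>: "B_topology \<tau>" and "U \<in> levels \<tau> (B4_atom i)" "V \<in> levels \<tau> (B4_atom i)"
  shows "U \<inter> V \<in> levels \<tau> (B4_atom i)"
proof -
  obtain l m where "l \<in> \<tau>" "m \<in> \<tau>" "U = slice l i" "V = slice m i"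
    using assms(2,3) unfolding mem_levels_B4_atom by blast
  then have "U \<inter> V = slice (inf l m) i" "inf l m \<in> \<tau>"
    by (simp_all add: B_topology_inf[OF \<tau>])
  then show ?thesis
    unfolding mem_levels_B4_atom by (rule bexI)
qed

lemma Union_in_levels:
  assumes \<tau>: "B_topology \<tau>" and K: "K \<subseteq> levels \<tau> (B4_atom i)"
  shows "\<Union>K \<in> levels \<tau> (B4_atom i)"
proof -
  let ?S = "{l \<in> \<tau>. slice l i \<in> K}"
  have "K = (\<lambda>l. slice l i) ` ?S"
  proof (intro equalityI subsetI)
    fix U assume "U \<in> K"
    then have "U \<in> levels \<tau> (B4_atom i)"
      using K by blast
    then obtain l where "l \<in> \<tau>" "U = slice l i"
      unfolding mem_levels_B4_atom by blast
    with \<open>U \<in> K\<close> show "U \<in> (\<lambda>l. slice l i) ` ?S"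
      by (intro image_eqI[of _ _ l]) simp_all
  qed auto
  then have "\<Union>K = (\<Union>l\<in>?S. slice l i)"
    by (rule arg_cong[where f = Union])
  also have "\<dots> = slice (Sup ?S) i"
    by simp
  finally have "\<Union>K = slice (Sup ?S) i" .
  moreover have "Sup ?S \<in> \<tau>"
    by (rule B_topology_Sup[OF \<tau>]) blast
  ultimately show ?thesis
    unfolding mem_levels_B4_atom by (rule bexI)
qed

lemma istopology_levels:
  "B_topology \<tau> \<Longrightarrow> istopology (\<lambda>U. U \<in> levels \<tau> (B4_atom i))"
  unfolding istopology_def by (simp add: Int_in_levels Union_in_levels subset_iff)

lemma openin_level_top:
  "B_topology \<tau> \<Longrightarrow> openin (level_top \<tau> (B4_atom i)) U \<longleftrightarrow> U \<in> levels \<tau> (B4_atom i)"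
  by (simp add: level_top_def istopology_levels)

lemma UNIV_in_levels: "B_topology \<tau> \<Longrightarrow> UNIV \<in> levels \<tau> b"
  unfolding levels_def level_def by (rule image_eqI[of _ _ "\<lambda>_. top"]) (auto intro: B_topology_const)

lemma topspace_level_top: "B_topology \<tau> \<Longrightarrow> topspace (level_top \<tau> (B4_atom i)) = UNIV"
  by (metis UNIV_in_levels openin_level_top openin_subset top.extremum_uniqueI)

lemma closedin_level_top:
  "B_topology \<tau> \<Longrightarrow> closedin (level_top \<tau> (B4_atom i)) S \<longleftrightarrow> - S \<in> levels \<tau> (B4_atom i)"
  by (simp add: closedin_def topspace_level_top openin_level_top Compl_eq_Diff_UNIV)

lemma B_closed_iff_closedin_slices:
  "B_topology \<tau> \<Longrightarrow> B_closed \<tau> m \<longleftrightarrow> (\<forall>i. closedin (level_top \<tau> (B4_atom i)) (slice m i))"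
  by (simp add: B_closed_def mem_B_topology_iff closedin_level_top)

lemma slice_B_closure:
  assumes \<tau>: "B_topology \<tau>"
  shows "slice (B_closure \<tau> n) i = level_top \<tau> (B4_atom i) closure_of slice n i"
proof -
  let ?X = "level_top \<tau> (B4_atom i)"
  let ?M = "{\<mu>. B_closed \<tau> \<mu> \<and> n \<le> \<mu>}"
  have "slice (B_closure \<tau> n) i = (\<Inter>\<mu>\<in>?M. slice \<mu> i)"
    by (simp add: B_closure_def)
  also have "\<dots> = ?X closure_of slice n i"
  proof
    let ?\<mu> = "of_slices (\<lambda>j. if j = i then ?X closure_of slice n i else UNIV)"
    have "closedin (level_top \<tau> (B4_atom j)) (slice ?\<mu> j)" for j
      using closedin_topspace[of "level_top \<tau> (B4_atom j)"]
      by (auto simp: topspace_level_top[OF \<tau>])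
    moreover have "slice n j \<subseteq> slice ?\<mu> j" for j
      using closure_of_subset[of "slice n i" ?X] by (simp add: topspace_level_top[OF \<tau>])
    ultimately have "?\<mu> \<in> ?M"
      unfolding mem_Collect_eq B_closed_iff_closedin_slices[OF \<tau>] fun_le_iff_slices by blast
    then have "(\<Inter>\<mu>\<in>?M. slice \<mu> i) \<subseteq> slice ?\<mu> i"
      by (rule INT_lower)
    then show "(\<Inter>\<mu>\<in>?M. slice \<mu> i) \<subseteq> ?X closure_of slice n i"
      by simp
    show "?X closure_of slice n i \<subseteq> (\<Inter>\<mu>\<in>?M. slice \<mu> i)"
    proof (rule INT_greatest)
      fix \<mu> assume "\<mu> \<in> ?M"
      then have "closedin ?X (slice \<mu> i)" "slice n i \<subseteq> slice \<mu> i"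
        unfolding mem_Collect_eq B_closed_iff_closedin_slices[OF \<tau>] fun_le_iff_slices by blast+
      then show "?X closure_of slice n i \<subseteq> slice \<mu> i"
        by (rule closure_of_minimal[rotated])
    qed
  qed
  finally show ?thesis .
qed

lemma mem_B_topology_iff_openin:
  "B_topology \<tau> \<Longrightarrow> l \<in> \<tau> \<longleftrightarrow> (\<forall>i. openin (level_top \<tau> (B4_atom i)) (slice l i))"
  by (simp add: mem_B_topology_iff openin_level_top)

lemma B_closure_le_iff:
  "B_topology \<tau> \<Longrightarrow>
    B_closure \<tau> n \<le> l \<longleftrightarrow> (\<forall>i. level_top \<tau> (B4_atom i) closure_of slice n i \<subseteq> slice l i)"
  by (simp add: fun_le_iff_slices slice_B_closure)

lemma normal_level_top_if_B_normal:
  assumes \<tau>: "B_topology \<tau>" and "B_normal \<tau>"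
  shows "normal_space (level_top \<tau> (B4_atom i))"
  unfolding normal_space_alt
proof (intro allI impI, elim conjE)
  fix S U
  let ?X = "level_top \<tau> (B4_atom i)"
  assume S: "closedin ?X S" and U: "openin ?X U" and "S \<subseteq> U"
  let ?l = "of_slices (\<lambda>j. if j = i then U else UNIV)"
  let ?m = "of_slices (\<lambda>j. if j = i then S else {})"
  have "?l \<in> \<tau>"
    using U openin_topspace[of "level_top \<tau> (B4_atom (\<not> i))"]
    by (auto simp: mem_B_topology_iff_openin[OF \<tau>] topspace_level_top[OF \<tau>])
  moreover have "B_closed \<tau> ?m"
    using S by (auto simp: B_closed_iff_closedin_slices[OF \<tau>])
  moreover have "?m \<le> ?l"
    using \<open>S \<subseteq> U\<close> by (simp add: fun_le_iff_slices)
  ultimately obtain n where n: "n \<in> \<tau>" "?m \<le> n" "B_closure \<tau> n \<le> ?l"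
    using assms(2) unfolding B_normal_def by (meson order.trans)
  have "openin ?X (slice n i)"
    using n(1) mem_B_topology_iff_openin[OF \<tau>] by blast
  moreover have "S \<subseteq> slice n i"
    using fun_le_iff_slices[THEN iffD1, OF n(2), rule_format, of i] by simp
  moreover have "?X closure_of slice n i \<subseteq> U"
    using B_closure_le_iff[OF \<tau>, THEN iffD1, OF n(3), rule_format, of i] by simp
  ultimately show "\<exists>V. openin ?X V \<and> S \<subseteq> V \<and> ?X closure_of V \<subseteq> U"
    by blast
qed

lemma B_normal_if_normal_level_tops:
  assumes \<tau>: "B_topology \<tau>" and "\<And>i. normal_space (level_top \<tau> (B4_atom i))"
  shows "B_normal \<tau>"
  unfolding B_normal_def
proof (intro allI impI)
  fix l m assume "l \<in> \<tau>" "B_closed \<tau> m" "m \<le> l"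
  then have "\<exists>V. openin (level_top \<tau> (B4_atom i)) V \<and> slice m i \<subseteq> V \<and>
                 level_top \<tau> (B4_atom i) closure_of V \<subseteq> slice l i" for i
    using assms(2) unfolding normal_space_alt
    by (simp add: mem_B_topology_iff_openin[OF \<tau>] B_closed_iff_closedin_slices[OF \<tau>]
        fun_le_iff_slices)
  then obtain V where V: "\<And>i. openin (level_top \<tau> (B4_atom i)) (V i)" "\<And>i. slice m i \<subseteq> V i"
    "\<And>i. level_top \<tau> (B4_atom i) closure_of V i \<subseteq> slice l i"
    by metis
  have "of_slices V \<in> \<tau>"
    using V(1) by (simp add: mem_B_topology_iff_openin[OF \<tau>])
  moreover have "m \<le> of_slices V"
    using V(2) by (simp add: fun_le_iff_slices)
  moreover have "of_slices V \<le> B_closure \<tau> (of_slices V)"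
    using closure_of_subset[OF openin_subset, OF V(1)]
    by (simp add: fun_le_iff_slices slice_B_closure[OF \<tau>])
  moreover have "B_closure \<tau> (of_slices V) \<le> l"
    using V(3) by (simp add: B_closure_le_iff[OF \<tau>])
  ultimately show "\<exists>n\<in>\<tau>. m \<le> n \<and> n \<le> B_closure \<tau> n \<and> B_closure \<tau> n \<le> l"
    by blast
qed

lemma B_normal_iff_normal_level_tops:
  "B_topology \<tau> \<Longrightarrow> B_normal \<tau> \<longleftrightarrow> (\<forall>i. normal_space (level_top \<tau> (B4_atom i)))"
  using normal_level_top_if_B_normal B_normal_if_normal_level_tops by blast

lemma B4_coord_spec_order:
  "B4_coord i (spec_order \<tau> x y) \<longleftrightarrow> (\<forall>U\<in>levels \<tau> (B4_atom i). x \<in> U \<longrightarrow> y \<in> U)"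
  by (auto simp: spec_order_def bimp_def levels_def level_B4_atom slice_def)

lemma spec_order_eq_top_iff:
  "spec_order \<tau> x y = top \<longleftrightarrow> (\<forall>i. \<forall>U\<in>levels \<tau> (B4_atom i). x \<in> U \<longrightarrow> y \<in> U)"
  unfolding B4_eq_iff_coord B4_coord_spec_order by simp

lemma B4_coord_spec_order_iff_in_closure:
  "B_topology \<tau> \<Longrightarrow>
    B4_coord i (spec_order \<tau> x y) \<longleftrightarrow> x \<in> level_top \<tau> (B4_atom i) closure_of {y}"
  by (auto simp: B4_coord_spec_order in_closure_of topspace_level_top openin_level_top)

lemma B_R0_iff_r0_level_tops:
  assumes \<tau>: "B_topology \<tau>"
  shows "B_R0 \<tau> \<longleftrightarrow> (\<forall>i. r0_space (level_top \<tau> (B4_atom i)))"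
  unfolding B_R0_def B4_eq_iff_coord B4_coord_spec_order_iff_in_closure[OF \<tau>]
    r0_space_iff_closure_of_singleton_sym
  by blast

lemma B_T0_iff_t0_join_top:
  assumes \<tau>: "B_topology \<tau>"
  shows "B_T0 \<tau> \<longleftrightarrow> t0_space (join_top \<tau>)"
proof -
  have levels: "levels \<tau> tt \<union> levels \<tau> ff = (\<Union>i. levels \<tau> (B4_atom i))"
    by (simp add: UN_bool_eq B4_atom_def)
  have cover: "\<Union>(\<Union>i. levels \<tau> (B4_atom i)) = UNIV"
    using UNIV_in_levels[OF \<tau>] by blast
  have t0: "t0_space (join_top \<tau>) \<longleftrightarrow>
      (\<forall>x y. (\<forall>i. \<forall>U\<in>levels \<tau> (B4_atom i). x \<in> U \<longleftrightarrow> y \<in> U) \<longrightarrow> x = y)"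
    unfolding join_top_def t0_space_topology_generated_by levels
    by (simp only: cover ball_UNIV ball_UN)
  have spec: "spec_order \<tau> x y = top \<and> spec_order \<tau> y x = top \<longleftrightarrow>
      (\<forall>i. \<forall>U\<in>levels \<tau> (B4_atom i). x \<in> U \<longleftrightarrow> y \<in> U)" for x y
    unfolding spec_order_eq_top_iff by auto
  show ?thesis
    unfolding B_T0_def t0 spec ..
qed

theorem mainTheorem18:
  fixes \<tau> :: "('a \<Rightarrow> B4) set"
  assumes "B_topology \<tau>"
  shows "(B_normal \<tau> \<longleftrightarrow>
            normal_space (level_top \<tau> tt) \<and> normal_space (level_top \<tau> ff))
       \<and> (B_T4 \<tau> \<longleftrightarrow>
            t0_space (join_top \<tau>) \<and>
            r0_space (level_top \<tau> tt) \<and> r0_space (level_top \<tau> ff) \<and>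
            normal_space (level_top \<tau> tt) \<and> normal_space (level_top \<tau> ff))"
proof -
  have normal: "B_normal \<tau> \<longleftrightarrow> normal_space (level_top \<tau> tt) \<and> normal_space (level_top \<tau> ff)"
    using B_normal_iff_normal_level_tops[OF assms] all_B4_atom[of "\<lambda>b. normal_space (level_top \<tau> b)"]
    by simp
  have R0: "B_R0 \<tau> \<longleftrightarrow> r0_space (level_top \<tau> tt) \<and> r0_space (level_top \<tau> ff)"
    using B_R0_iff_r0_level_tops[OF assms] all_B4_atom[of "\<lambda>b. r0_space (level_top \<tau> b)"]
    by simp
  show ?thesis
    unfolding B_T4_def B_T1_def normal R0 B_T0_iff_t0_join_top[OF assms]
    by auto
qed

end
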